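(* Let $a\neq 0$ be a real constant and let $M$ be the open subset $\{r>0\}$ of $\mathbb{R}^4$ with coordinates $(t,\phi,r,z)$, equipped with the Som-Raychaudhuri metric $$g=(dt+a r^{2}\,d\phi)^{2}-r^{2}\,d\phi^{2}-dr^{2}-dz^{2}.$$ Then $(M,g)$ has the following properties: (i) its Ricci tensor is cyclic parallel; (ii) it is $2$-quasi-Einstein; (iii) it is an $Ein(3)$ manifold; (iv) it is generalized quasi-Einstein both in the sense of Chaki and in the sense of De and Ghosh; (v) it is pseudo quasi-Einstein; (vi) it is special Ricci generalized pseudosymmetric, i.e. $R\cdot R=Q(S,R)$; (vii) it is a manifold of pseudosymmetric Weyl conformal curvature tensor; (viii) it is of generalized Roter type; (ix) its Ricci tensor is Riemann compatible, conformal (Weyl) compatible, concircular compatible and conharmonic compatible.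
   Context: Notation for a semi-Riemannian manifold $(M,g)$ of dimension $n$ (here $n=4$): $\nabla$ is the Levi-Civita connection, $\mathcal R(X,Y)=[\nabla_X,\nabla_Y]-\nabla_{[X,Y]}$, $R(X_1,X_2,X_3,X_4)=g(\mathcal R(X_1,X_2)X_3,X_4)$, $S$ is the Ricci tensor, $\kappa$ the scalar curvature, $\mathcal S$ the Ricci operator ($g(X,\mathcal SY)=S(X,Y)$), $S^2(X,Y)=S(X,\mathcal SY)$, $S^3(X,Y)=S(X,\mathcal S^2Y)$. For a symmetric $(0,2)$-tensor $A$, $(X\wedge_A Y)Z=A(Y,Z)X-A(X,Z)Y$. Weyl conformal operator $\mathcal C(X,Y)=\mathcal R(X,Y)-\frac{1}{n-2}\big(X\wedge_g\mathcal SY+\mathcal SX\wedge_g Y-\frac{\kappa}{n-1}X\wedge_g Y\big)$; concircular operator $\mathcal W(X,Y)=\mathcal R(X,Y)-\frac{\kappa}{n(n-1)}X\wedge_gY$; conharmonic operator $\mathcal K(X,Y)=\mathcal R(X,Y)-\frac{1}{n-2}(X\wedge_g\mathcal SY+\mathcal SX\wedge_gY)$; the $(0,4)$-tensors $C,W,K$ are obtained from these as $R$ from $\mathcal R$. For an endomorphism $\mathcal H$ and a $(0,k)$-tensor $T$, $(\mathcal H\cdot T)(X_1,\dots,X_k)=-\sum_{i}T(X_1,\dots,\mathcal HX_i,\dots,X_k)$; $(R\cdot T)(X_1,\dots,X_k,X,Y)=(\mathcal R(X,Y)\cdot T)(X_1,\dots,X_k)$, similarly $C\cdot T$ with $\mathcal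 C(X,Y)$, and $Q(A,T)(X_1,\dots,X_k,X,Y)=((X\wedge_AY)\cdot T)(X_1,\dots,X_k)$. Kulkarni–Nomizu product: $(A\wedge E)(X_1,X_2,X,Y)=A(X_1,Y)E(X_2,X)+A(X_2,X)E(X_1,Y)-A(X_1,X)E(X_2,Y)-A(X_2,Y)E(X_1,X)$. Definitions: $M$ is $k$-quasi-Einstein if $\mathrm{rank}(S-\alpha g)=k$ for some smooth function $\alpha$ (quasi-Einstein means $k=1$). $M$ is $Ein(3)$ if $S^3+a_3S^2+a_4S+a_5g=0$ for some smooth functions $a_i$. The Ricci tensor is cyclic parallel if $(\nabla_{X_1}S)(X_2,X_3)+(\nabla_{X_2}S)(X_3,X_1)+(\nabla_{X_3}S)(X_1,X_2)=0$. Let $U$ be the set of points where $S-\nu_1g-\nu_2\xi\otimes\xi\neq0$ for all scalars $\nu_1,\nu_2$ and $1$-forms $\xi$. $M$ is generalized quasi-Einstein in the sense of Chaki (resp. De and Ghosh) if on $U$, $S=\alpha g+\beta\Pi\otimes\Pi+\gamma(\Pi\otimes\Phi+\Phi\otimes\Pi)$ (resp. $S=\alpha g+\beta\Pi\otimes\Pi+\gamma\Phi\otimes\Phi$) for smooth functions $\alpha,\beta,\gamma$ and $1$-forms $\Pi,\Phi$ whose associated vector fields are mutually orthogonal. $M$ is pseudo quasi-Einstein if on $U$, $S=\alpha g+\beta\Pi\otimes\Pi+\gamma E$ for smooth functions $\alpha,\beta,\gamma$, a $1$-form $\Pi$ and a trace-free symmetric $(0,2)$-tensor $E$ with $E(X,V)=0$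 for all $X$, $V$ being the vector field associated to $\Pi$. $M$ is a manifold of pseudosymmetric Weyl conformal curvature tensor if $C\cdot C=L\,Q(g,C)$ for some smooth function $L$. $M$ is of generalized Roter type if $R=L_1g\wedge g+L_2g\wedge S+L_3S\wedge S+L_4g\wedge S^2+L_5S\wedge S^2+L_6S^2\wedge S^2$ for some smooth functions $L_j$. A symmetric $(0,2)$-tensor $E$ with endomorphism $\mathcal E$ ($g(\mathcal EX,Y)=E(X,Y)$) is Riemann compatible if $R(\mathcal EX_1,X,X_2,X_3)+R(\mathcal EX_2,X,X_3,X_1)+R(\mathcal EX_3,X,X_1,X_2)=0$ for all vector fields; conformal (Weyl), concircular and conharmonic compatibility are defined identically with $R$ replaced by $C$, $W$, $K$ respectively. *)

theory Defs
  imports "HOL-Analysis.Analysis"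
begin

text \<open>Points and tangent vectors are elements of real^'n (coordinate components);
  a metric is given by its component matrix field G p $ i $ j = g_p(d_i, d_j).
  A (0,k)-tensor at a point is a function of a list of k tangent vectors.\<close>

type_synonym 'n metric = "real^'n \<Rightarrow> real^'n^'n"
type_synonym 'n tensor = "(real^'n) list \<Rightarrow> real"

definition ev :: "'n::finite \<Rightarrow> real^'n" where
  "ev i = axis i 1"

definition pd :: "(real^'n::finite \<Rightarrow> real) \<Rightarrow> 'n \<Rightarrow> real^'n \<Rightarrow> real" where
  "pd f i p = deriv (\<lambda>s. f (p + s *\<^sub>R ev i)) 0"

fun pdl :: "'n::finite list \<Rightarrow> (real^'n \<Rightarrow> real) \<Rightarrow> real^'n \<Rightarrow> real" where
  "pdl [] f = f"
| "pdl (i # is) f = pd (pdl is f) i"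

definition smooth_fun :: "(real^'n::finite) set \<Rightarrow> (real^'n \<Rightarrow> real) \<Rightarrow> bool" where
  "smooth_fun S f \<longleftrightarrow>
     (\<forall>is. continuous_on S (pdl is f) \<and>
        (\<forall>i. \<forall>p\<in>S. (\<lambda>s. pdl is f (p + s *\<^sub>R ev i)) differentiable (at 0)))"

definition smooth_field :: "(real^'n::finite) set \<Rightarrow> (real^'n \<Rightarrow> real^'n) \<Rightarrow> bool" where
  "smooth_field S V \<longleftrightarrow> (\<forall>i. smooth_fun S (\<lambda>p. V p $ i))"

definition smooth_tensor2 :: "(real^'n::finite) set \<Rightarrow> (real^'n \<Rightarrow> real^'n^'n) \<Rightarrow> bool" where
  "smooth_tensor2 S E \<longleftrightarrow> (\<forall>i j. smooth_fun S (\<lambda>p. E p $ i $ j))"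

definition gform :: "'n::finite metric \<Rightarrow> real^'n \<Rightarrow> real^'n \<Rightarrow> real^'n \<Rightarrow> real" where
  "gform G p X Y = (\<Sum>i\<in>UNIV. \<Sum>j\<in>UNIV. G p $ i $ j * X $ i * Y $ j)"

definition ginv :: "'n::finite metric \<Rightarrow> real^'n \<Rightarrow> real^'n^'n" where
  "ginv G p = matrix_inv (G p)"

text \<open>Christoffel symbols: christ G p k i j = Gamma^k_{ij}, nabla_{d_i} d_j = sum_k Gamma^k_{ij} d_k.\<close>
definition christ :: "'n::finite metric \<Rightarrow> real^'n \<Rightarrow> 'n \<Rightarrow> 'n \<Rightarrow> 'n \<Rightarrow> real" where
  "christ G p k i j = (1/2) * (\<Sum>l\<in>UNIV. ginv G p $ k $ l *
      (pd (\<lambda>q. G q $ j $ l) i p + pd (\<lambda>q. G q $ i $ l) j p - pd (\<lambda>q. G q $ i $ j) l p))"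

text \<open>rcomp G p i j k l = l-th component of R(d_i,d_j)d_k, with
  R(X,Y) = [nabla_X,nabla_Y] - nabla_[X,Y].\<close>
definition rcomp :: "'n::finite metric \<Rightarrow> real^'n \<Rightarrow> 'n \<Rightarrow> 'n \<Rightarrow> 'n \<Rightarrow> 'n \<Rightarrow> real" where
  "rcomp G p i j k l =
     pd (\<lambda>q. christ G q l j k) i p - pd (\<lambda>q. christ G q l i k) j p
     + (\<Sum>m\<in>UNIV. christ G p m j k * christ G p l i m - christ G p m i k * christ G p l j m)"

definition curv :: "'n::finite metric \<Rightarrow> real^'n \<Rightarrow> real^'n \<Rightarrow> real^'n \<Rightarrow> real^'n \<Rightarrow> real^'n" where
  "curv G p X Y Z = (\<chi> l. \<Sum>i\<in>UNIV. \<Sum>j\<in>UNIV. \<Sum>k\<in>UNIV. X $ i * Y $ j * Z $ k * rcomp G p i j k l)"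

definition Rtens :: "'n::finite metric \<Rightarrow> real^'n \<Rightarrow> real^'n \<Rightarrow> real^'n \<Rightarrow> real^'n \<Rightarrow> real^'n \<Rightarrow> real" where
  "Rtens G p X1 X2 X3 X4 = gform G p (curv G p X1 X2 X3) X4"

definition ricci :: "'n::finite metric \<Rightarrow> real^'n \<Rightarrow> real^'n \<Rightarrow> real^'n \<Rightarrow> real" where
  "ricci G p X Y = (\<Sum>l\<in>UNIV. curv G p (ev l) X Y $ l)"

definition scal :: "'n::finite metric \<Rightarrow> real^'n \<Rightarrow> real" where
  "scal G p = (\<Sum>i\<in>UNIV. \<Sum>j\<in>UNIV. ginv G p $ i $ j * ricci G p (ev i) (ev j))"

text \<open>Ricci operator: g(X, ricop Y) = S(X,Y).\<close>
definition ricop :: "'n::finite metric \<Rightarrow> real^'n \<Rightarrow> real^'n \<Rightarrow> real^'n" where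
  "ricop G p Y = ginv G p *v (\<chi> i. ricci G p (ev i) Y)"

definition ricci2 :: "'n::finite metric \<Rightarrow> real^'n \<Rightarrow> real^'n \<Rightarrow> real^'n \<Rightarrow> real" where
  "ricci2 G p X Y = ricci G p X (ricop G p Y)"

definition ricci3 :: "'n::finite metric \<Rightarrow> real^'n \<Rightarrow> real^'n \<Rightarrow> real^'n \<Rightarrow> real" where
  "ricci3 G p X Y = ricci G p X (ricop G p (ricop G p Y))"

definition wedge :: "(real^'n \<Rightarrow> real^'n \<Rightarrow> real) \<Rightarrow> real^'n \<Rightarrow> real^'n \<Rightarrow> real^'n \<Rightarrow> real^'n" where
  "wedge A X Y Z = A Y Z *\<^sub>R X - A X Z *\<^sub>R Y"

definition dimr :: "'n::finite itself \<Rightarrow> real" where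
  "dimr _ = real CARD('n)"

definition weylop :: "'n::finite metric \<Rightarrow> real^'n \<Rightarrow> real^'n \<Rightarrow> real^'n \<Rightarrow> real^'n \<Rightarrow> real^'n" where
  "weylop G p X Y Z = curv G p X Y Z - (1 / (dimr TYPE('n) - 2)) *\<^sub>R
     (wedge (gform G p) X (ricop G p Y) Z + wedge (gform G p) (ricop G p X) Y Z
      - (scal G p / (dimr TYPE('n) - 1)) *\<^sub>R wedge (gform G p) X Y Z)"

definition concop :: "'n::finite metric \<Rightarrow> real^'n \<Rightarrow> real^'n \<Rightarrow> real^'n \<Rightarrow> real^'n \<Rightarrow> real^'n" where
  "concop G p X Y Z = curv G p X Y Z
     - (scal G p / (dimr TYPE('n) * (dimr TYPE('n) - 1))) *\<^sub>R wedge (gform G p) X Y Z"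

definition conhop :: "'n::finite metric \<Rightarrow> real^'n \<Rightarrow> real^'n \<Rightarrow> real^'n \<Rightarrow> real^'n \<Rightarrow> real^'n" where
  "conhop G p X Y Z = curv G p X Y Z - (1 / (dimr TYPE('n) - 2)) *\<^sub>R
     (wedge (gform G p) X (ricop G p Y) Z + wedge (gform G p) (ricop G p X) Y Z)"

definition Ctens :: "'n::finite metric \<Rightarrow> real^'n \<Rightarrow> real^'n \<Rightarrow> real^'n \<Rightarrow> real^'n \<Rightarrow> real^'n \<Rightarrow> real" where
  "Ctens G p X1 X2 X3 X4 = gform G p (weylop G p X1 X2 X3) X4"

definition Wtens :: "'n::finite metric \<Rightarrow> real^'n \<Rightarrow> real^'n \<Rightarrow> real^'n \<Rightarrow> real^'n \<Rightarrow> real^'n \<Rightarrow> real" where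
  "Wtens G p X1 X2 X3 X4 = gform G p (concop G p X1 X2 X3) X4"

definition Ktens :: "'n::finite metric \<Rightarrow> real^'n \<Rightarrow> real^'n \<Rightarrow> real^'n \<Rightarrow> real^'n \<Rightarrow> real^'n \<Rightarrow> real" where
  "Ktens G p X1 X2 X3 X4 = gform G p (conhop G p X1 X2 X3) X4"

definition endo_act :: "(real^'n \<Rightarrow> real^'n) \<Rightarrow> 'n tensor \<Rightarrow> 'n tensor" where
  "endo_act H T xs = - (\<Sum>i<length xs. T (xs[i := H (xs ! i)]))"

definition tens4 :: "(real^'n \<Rightarrow> real^'n \<Rightarrow> real^'n \<Rightarrow> real^'n \<Rightarrow> real) \<Rightarrow> 'n tensor" where
  "tens4 f xs = f (xs ! 0) (xs ! 1) (xs ! 2) (xs ! 3)"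

definition kn :: "(real^'n \<Rightarrow> real^'n \<Rightarrow> real) \<Rightarrow> (real^'n \<Rightarrow> real^'n \<Rightarrow> real)
    \<Rightarrow> real^'n \<Rightarrow> real^'n \<Rightarrow> real^'n \<Rightarrow> real^'n \<Rightarrow> real" where
  "kn A E X1 X2 X Y = A X1 Y * E X2 X + A X2 X * E X1 Y - A X1 X * E X2 Y - A X2 Y * E X1 X"

definition nablaS_comp :: "'n::finite metric \<Rightarrow> real^'n \<Rightarrow> 'n \<Rightarrow> 'n \<Rightarrow> 'n \<Rightarrow> real" where
  "nablaS_comp G p i j k =
     pd (\<lambda>q. ricci G q (ev j) (ev k)) i p
     - (\<Sum>m\<in>UNIV. christ G p m i j * ricci G p (ev m) (ev k))
     - (\<Sum>m\<in>UNIV. christ G p m i k * ricci G p (ev j) (ev m))"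

definition nablaS :: "'n::finite metric \<Rightarrow> real^'n \<Rightarrow> real^'n \<Rightarrow> real^'n \<Rightarrow> real^'n \<Rightarrow> real" where
  "nablaS G p X1 X2 X3 = (\<Sum>i\<in>UNIV. \<Sum>j\<in>UNIV. \<Sum>k\<in>UNIV. X1 $ i * X2 $ j * X3 $ k * nablaS_comp G p i j k)"

definition cyclic_parallel_ricci :: "'n::finite metric \<Rightarrow> (real^'n) set \<Rightarrow> bool" where
  "cyclic_parallel_ricci G M \<longleftrightarrow>
     (\<forall>p\<in>M. \<forall>X1 X2 X3. nablaS G p X1 X2 X3 + nablaS G p X2 X3 X1 + nablaS G p X3 X1 X2 = 0)"

definition k_quasi_einstein :: "nat \<Rightarrow> 'n::finite metric \<Rightarrow> (real^'n) set \<Rightarrow> bool" where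
  "k_quasi_einstein k G M \<longleftrightarrow>
     (\<exists>\<alpha>. smooth_fun M \<alpha> \<and>
        (\<forall>p\<in>M. rank (\<chi> i j. ricci G p (ev i) (ev j) - \<alpha> p * G p $ i $ j) = k))"

definition ein3 :: "'n::finite metric \<Rightarrow> (real^'n) set \<Rightarrow> bool" where
  "ein3 G M \<longleftrightarrow>
     (\<exists>a3 a4 a5. smooth_fun M a3 \<and> smooth_fun M a4 \<and> smooth_fun M a5 \<and>
        (\<forall>p\<in>M. \<forall>X Y. ricci3 G p X Y + a3 p * ricci2 G p X Y + a4 p * ricci G p X Y
                        + a5 p * gform G p X Y = 0))"

text \<open>The set U: points where S - nu1 g - nu2 xi\<otimes>xi \<noteq> 0 for all scalars nu1, nu2 and covectors xi
  (a covector is given by its components; xi(X) = xi \<bullet> X).\<close>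
definition Uset :: "'n::finite metric \<Rightarrow> (real^'n) set \<Rightarrow> (real^'n) set" where
  "Uset G M = {p\<in>M. \<forall>\<nu>1 \<nu>2 (\<xi>::real^'n). \<exists>X Y.
      ricci G p X Y - \<nu>1 * gform G p X Y - \<nu>2 * ((\<xi> \<bullet> X) * (\<xi> \<bullet> Y)) \<noteq> 0}"

text \<open>1-forms Pi, Phi given by component fields; their associated vector fields are ginv *v Pi.\<close>
definition gqe_chaki :: "'n::finite metric \<Rightarrow> (real^'n) set \<Rightarrow> bool" where
  "gqe_chaki G M \<longleftrightarrow> (let U = Uset G M in
     (\<exists>\<alpha> \<beta> \<gamma> \<pi> \<phi>. smooth_fun U \<alpha> \<and> smooth_fun U \<beta> \<and> smooth_fun U \<gamma> \<and>
        smooth_field U \<pi> \<and> smooth_field U \<phi> \<and>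
        (\<forall>p\<in>U. gform G p (ginv G p *v \<pi> p) (ginv G p *v \<phi> p) = 0 \<and>
           (\<forall>X Y. ricci G p X Y = \<alpha> p * gform G p X Y + \<beta> p * ((\<pi> p \<bullet> X) * (\<pi> p \<bullet> Y))
                 + \<gamma> p * ((\<pi> p \<bullet> X) * (\<phi> p \<bullet> Y) + (\<phi> p \<bullet> X) * (\<pi> p \<bullet> Y))))))"

definition gqe_de_ghosh :: "'n::finite metric \<Rightarrow> (real^'n) set \<Rightarrow> bool" where
  "gqe_de_ghosh G M \<longleftrightarrow> (let U = Uset G M in
     (\<exists>\<alpha> \<beta> \<gamma> \<pi> \<phi>. smooth_fun U \<alpha> \<and> smooth_fun U \<beta> \<and> smooth_fun U \<gamma> \<and>
        smooth_field U \<pi> \<and> smooth_field U \<phi> \<and>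
        (\<forall>p\<in>U. gform G p (ginv G p *v \<pi> p) (ginv G p *v \<phi> p) = 0 \<and>
           (\<forall>X Y. ricci G p X Y = \<alpha> p * gform G p X Y + \<beta> p * ((\<pi> p \<bullet> X) * (\<pi> p \<bullet> Y))
                 + \<gamma> p * ((\<phi> p \<bullet> X) * (\<phi> p \<bullet> Y))))))"

definition pseudo_qe :: "'n::finite metric \<Rightarrow> (real^'n) set \<Rightarrow> bool" where
  "pseudo_qe G M \<longleftrightarrow> (let U = Uset G M in
     (\<exists>\<alpha> \<beta> \<gamma> \<pi> E. smooth_fun U \<alpha> \<and> smooth_fun U \<beta> \<and> smooth_fun U \<gamma> \<and>
        smooth_field U \<pi> \<and> smooth_tensor2 U E \<and>
        (\<forall>p\<in>U. (\<forall>i j. E p $ i $ j = E p $ j $ i) \<and>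
           (\<Sum>i\<in>UNIV. \<Sum>j\<in>UNIV. ginv G p $ i $ j * E p $ i $ j) = 0 \<and>
           (\<forall>X. (\<Sum>i\<in>UNIV. \<Sum>j\<in>UNIV. E p $ i $ j * X $ i * (ginv G p *v \<pi> p) $ j) = 0) \<and>
           (\<forall>X Y. ricci G p X Y = \<alpha> p * gform G p X Y + \<beta> p * ((\<pi> p \<bullet> X) * (\<pi> p \<bullet> Y))
                 + \<gamma> p * (\<Sum>i\<in>UNIV. \<Sum>j\<in>UNIV. E p $ i $ j * X $ i * Y $ j)))))"

definition special_ricci_gen_pseudosym :: "'n::finite metric \<Rightarrow> (real^'n) set \<Rightarrow> bool" where
  "special_ricci_gen_pseudosym G M \<longleftrightarrow>
     (\<forall>p\<in>M. \<forall>xs X Y. length xs = 4 \<longrightarrow>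
        endo_act (curv G p X Y) (tens4 (Rtens G p)) xs
        = endo_act (wedge (ricci G p) X Y) (tens4 (Rtens G p)) xs)"

definition weyl_pseudosym :: "'n::finite metric \<Rightarrow> (real^'n) set \<Rightarrow> bool" where
  "weyl_pseudosym G M \<longleftrightarrow>
     (\<exists>L. smooth_fun M L \<and>
       (\<forall>p\<in>M. \<forall>xs X Y. length xs = 4 \<longrightarrow>
          endo_act (weylop G p X Y) (tens4 (Ctens G p)) xs
          = L p * endo_act (wedge (gform G p) X Y) (tens4 (Ctens G p)) xs))"

definition gen_roter :: "'n::finite metric \<Rightarrow> (real^'n) set \<Rightarrow> bool" where
  "gen_roter G M \<longleftrightarrow>
     (\<exists>L1 L2 L3 L4 L5 L6. smooth_fun M L1 \<and> smooth_fun M L2 \<and> smooth_fun M L3 \<and>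
        smooth_fun M L4 \<and> smooth_fun M L5 \<and> smooth_fun M L6 \<and>
       (\<forall>p\<in>M. \<forall>X1 X2 X3 X4. Rtens G p X1 X2 X3 X4 =
            L1 p * kn (gform G p) (gform G p) X1 X2 X3 X4
          + L2 p * kn (gform G p) (ricci G p) X1 X2 X3 X4
          + L3 p * kn (ricci G p) (ricci G p) X1 X2 X3 X4
          + L4 p * kn (gform G p) (ricci2 G p) X1 X2 X3 X4
          + L5 p * kn (ricci G p) (ricci2 G p) X1 X2 X3 X4
          + L6 p * kn (ricci2 G p) (ricci2 G p) X1 X2 X3 X4))"

definition compatible :: "(real^'n \<Rightarrow> real^'n \<Rightarrow> real^'n \<Rightarrow> real^'n \<Rightarrow> real^'n \<Rightarrow> real)
    \<Rightarrow> (real^'n \<Rightarrow> real^'n \<Rightarrow> real^'n) \<Rightarrow> (real^'n) set \<Rightarrow> bool" where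
  "compatible T Eop M \<longleftrightarrow>
     (\<forall>p\<in>M. \<forall>X1 X2 X3 X. T p (Eop p X1) X X2 X3 + T p (Eop p X2) X X3 X1 + T p (Eop p X3) X X1 X2 = 0)"

section \<open>The Som-Raychaudhuri metric, coordinates (t,phi,r,z) = indices (1,2,3,4)\<close>

definition som_ray :: "real \<Rightarrow> 4 metric" where
  "som_ray a p = (let r = p $ 3 in
     \<chi> i j. if i = 1 \<and> j = 1 then 1
            else if (i = 1 \<and> j = 2) \<or> (i = 2 \<and> j = 1) then a * r^2
            else if i = 2 \<and> j = 2 then a^2 * r^4 - r^2
            else if (i = 3 \<and> j = 3) \<or> (i = 4 \<and> j = 4) then -1
            else 0)"

definition som_ray_domain :: "(real^4) set" where
  "som_ray_domain = {p. p $ 3 > 0}"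

end

theory Submission
  imports Defs "HOL-Computational_Algebra.Polynomial"
begin

text \<open>In the coframe \<open>\<theta>\<^sup>1 = dt + a r\<^sup>2 d\<phi>, \<theta>\<^sup>2 = r d\<phi>, \<theta>\<^sup>3 = dr, \<theta>\<^sup>4 = dz\<close> the metric is
  the Minkowski form \<open>(\<theta>\<^sup>1)\<^sup>2 - (\<theta>\<^sup>2)\<^sup>2 - (\<theta>\<^sup>3)\<^sup>2 - (\<theta>\<^sup>4)\<^sup>2\<close>, and a direct computation of the
  Christoffel symbols shows that the curvature operator, the Ricci tensor
  \<open>S = 2a\<^sup>2((\<theta>\<^sup>1)\<^sup>2 + (\<theta>\<^sup>2)\<^sup>2 + (\<theta>\<^sup>3)\<^sup>2)\<close> and the scalar curvature \<open>-2a\<^sup>2\<close> all have constant components in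
  this coframe. Every algebraic condition of the theorem thereby becomes a polynomial identity
  between constant-coefficient tensors on a Lorentzian vector space, with explicit witnesses;
  for instance \<open>S\<^sup>3 = 4a\<^sup>4 S\<close>, and \<open>S + 2a\<^sup>2g\<close> has rank 2. The only differential condition, cyclic
  parallelism of \<open>S\<close>, follows from the explicit components of \<open>\<nabla>S\<close>.\<close>

lemma matrix_inv_eq:
  fixes A B :: "'a::field^'n^'n"
  assumes "A ** B = mat 1"
  shows "matrix_inv A = B"
proof -
  have AB: "A ** B = mat 1 \<and> B ** A = mat 1"
    using assms matrix_left_right_inverse by blast
  then have C: "A ** matrix_inv A = mat 1 \<and> matrix_inv A ** A = mat 1"
    unfolding matrix_inv_def by (rule someI)
  have "matrix_inv A = matrix_inv A ** (A ** B)" using AB by simp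
  also have "\<dots> = B" using C by (simp add: matrix_mul_assoc)
  finally show ?thesis .
qed

lemma vector_4 [simp]:
  "(vector [x1, x2, x3, x4] :: ('a::zero)^4) $ 1 = x1"
  "(vector [x1, x2, x3, x4] :: ('a::zero)^4) $ 2 = x2"
  "(vector [x1, x2, x3, x4] :: ('a::zero)^4) $ 3 = x3"
  "(vector [x1, x2, x3, x4] :: ('a::zero)^4) $ 4 = x4"
  unfolding vector_def by simp_all

lemma ev_component [simp]: "ev i $ j = (if j = i then 1 else 0)"
  by (simp add: ev_def axis_def)

lemma pd_fun_of_coord:
  fixes f :: "real^'n::finite \<Rightarrow> real"
  assumes p: "0 < p $ k" and f: "\<And>q. 0 < q $ k \<Longrightarrow> f q = h (q $ k)"
    and h: "(h has_real_derivative h') (at (p $ k))"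
  shows "pd f i p = (if i = k then h' else 0)"
proof (cases "i = k")
  case True
  have "((\<lambda>s. p $ k + s) has_real_derivative 1) (at 0)"
    by (auto intro!: derivative_eq_intros)
  moreover have "(h has_real_derivative h') (at (p $ k + 0))"
    using h by simp
  ultimately have "((\<lambda>s. h (p $ k + s)) has_real_derivative h') (at 0)"
    using DERIV_chain2 by fastforce
  then have "((\<lambda>s. f (p + s *\<^sub>R ev i)) has_real_derivative h') (at 0)"
  proof (rule has_field_derivative_transform_within_open)
    show "open {s. 0 < p $ k + s}" by (auto intro!: open_Collect_less continuous_intros)
  qed (use p f True in auto)
  then show ?thesis unfolding pd_def using True by (simp add: DERIV_imp_deriv)
next
  case False
  then have "(\<lambda>s. f (p + s *\<^sub>R ev i)) = (\<lambda>s. h (p $ k))"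
    using f p by auto
  then show ?thesis unfolding pd_def using False by simp
qed

lemma poly_coord_line_has_derivative:
  "((\<lambda>s. poly P ((p + s *\<^sub>R ev i) $ k)) has_real_derivative
      (if i = k then poly (pderiv P) (p $ k) else 0)) (at 0)"
proof -
  have "((\<lambda>s. poly P (p $ k + s * ev i $ k)) has_real_derivative
           poly (pderiv P) (p $ k + 0 * ev i $ k) * ev i $ k) (at 0)"
    by (rule DERIV_chain2[OF poly_DERIV]) (auto intro!: derivative_eq_intros)
  then show ?thesis
    by (cases "i = k") auto
qed

lemma pd_poly_coord:
  "pd (\<lambda>q::real^'n::finite. poly P (q $ k)) i = (\<lambda>q. if i = k then poly (pderiv P) (q $ k) else 0)"
  unfolding pd_def using poly_coord_line_has_derivative by (blast intro: DERIV_imp_deriv)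

lemma pdl_poly_coord: "\<exists>Q. pdl is (\<lambda>q::real^'n::finite. poly P (q $ k)) = (\<lambda>q. poly Q (q $ k))"
proof (induction "is")
  case (Cons i "is")
  then obtain Q where "pdl is (\<lambda>q::real^'n. poly P (q $ k)) = (\<lambda>q. poly Q (q $ k))" by blast
  then show ?case
    by (intro exI[of _ "if i = k then pderiv Q else 0"]) (simp add: pd_poly_coord)
qed auto

lemma smooth_fun_poly_coord: "smooth_fun S (\<lambda>q::real^'n::finite. poly P (q $ k))"
  unfolding smooth_fun_def
proof (intro allI conjI ballI)
  fix "is" :: "'n list" and i :: 'n and p :: "real^'n"
  obtain Q where Q: "pdl is (\<lambda>q::real^'n. poly P (q $ k)) = (\<lambda>q. poly Q (q $ k))"
    using pdl_poly_coord by blast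
  show "continuous_on S (pdl is (\<lambda>q. poly P (q $ k)))"
    unfolding Q by (intro continuous_intros)
  show "(\<lambda>s. pdl is (\<lambda>q. poly P (q $ k)) (p + s *\<^sub>R ev i)) differentiable at 0"
    unfolding Q real_differentiable_def using poly_coord_line_has_derivative by blast
qed

lemma smooth_fun_const: "smooth_fun S (\<lambda>q::real^'n::finite. c)"
  using smooth_fun_poly_coord[of S "[:c:]" undefined] by simp

lemma smooth_fun_coord_square: "smooth_fun S (\<lambda>q::real^'n::finite. c * (q $ k)^2)"
  using smooth_fun_poly_coord[of S "[:0, 0, c:]" k]
  by (simp add: power2_eq_square algebra_simps)

lemma smooth_field_vector4:
  assumes "smooth_fun S f1" "smooth_fun S f2" "smooth_fun S f3" "smooth_fun S f4"
  shows "smooth_field S (\<lambda>p. vector [f1 p, f2 p, f3 p, f4 p] :: real^4)"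
  using assms unfolding smooth_field_def forall_4 by simp

lemma rank_orthogonal_dyads:
  fixes A :: "real^'n::finite^'n" and u e :: "real^'n"
  assumes c: "c \<noteq> 0" and d: "d \<noteq> 0" and u: "u \<noteq> 0" and e: "e \<noteq> 0" and ue: "u \<bullet> e = 0"
    and A: "\<And>x. A *v x = (c * (u \<bullet> x)) *\<^sub>R u + (d * (e \<bullet> x)) *\<^sub>R e"
  shows "rank A = 2"
proof -
  have "range ((*v) A) \<subseteq> span {u, e}"
  proof
    fix y assume "y \<in> range ((*v) A)"
    then obtain x where "y = A *v x" by blast
    then show "y \<in> span {u, e}" by (simp add: A span_add span_scale span_base)
  qed
  moreover have "A *v ((1 / (c * (u \<bullet> u))) *\<^sub>R u) = u" "A *v ((1 / (d * (e \<bullet> e))) *\<^sub>R e) = e"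
    using c d u e ue by (simp_all add: A inner_commute[of e u])
  then have "{u, e} \<subseteq> range ((*v) A)"
    by (metis insert_subset rangeI empty_subsetI)
  moreover have "u \<notin> span {e}"
  proof
    assume "u \<in> span {e}"
    then obtain k where "u = k *\<^sub>R e" by (auto simp: span_singleton)
    with ue e u show False by simp
  qed
  then have "dim {u, e} = 2"
    using e by (simp add: dim_insert)
  ultimately show ?thesis
    unfolding rank_dim_range by (metis dim_subset dim_span order_antisym span_superset span_mono subset_trans)
qed

lemma endo_act_4:
  "endo_act H T [x0, x1, x2, x3] =
     - (T [H x0, x1, x2, x3] + T [x0, H x1, x2, x3] + T [x0, x1, H x2, x3] + T [x0, x1, x2, H x3])"
  by (simp add: endo_act_def numeral_eq_Suc lessThan_Suc algebra_simps)

lemma endo_act_tens4_transfer: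
  assumes "\<And>x. \<theta> (H x) = H' (\<theta> x)"
    and "\<And>x1 x2 x3 x4. T x1 x2 x3 x4 = T' (\<theta> x1) (\<theta> x2) (\<theta> x3) (\<theta> x4)"
  shows "endo_act H (tens4 T) [x0, x1, x2, x3] = endo_act H' (tens4 T') [\<theta> x0, \<theta> x1, \<theta> x2, \<theta> x3]"
  by (simp add: endo_act_4 tens4_def assms)

lemma endo_act_tens4_lincomb:
  assumes "\<And>x y v w z c d. T (c *\<^sub>R x + d *\<^sub>R y) v w z = c * T x v w z + d * T y v w z"
    and "\<And>x y v w z c d. T v (c *\<^sub>R x + d *\<^sub>R y) w z = c * T v x w z + d * T v y w z"
    and "\<And>x y v w z c d. T v w (c *\<^sub>R x + d *\<^sub>R y) z = c * T v w x z + d * T v w y z"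
    and "\<And>x y v w z c d. T v w z (c *\<^sub>R x + d *\<^sub>R y) = c * T v w z x + d * T v w z y"
  shows "endo_act (\<lambda>w. c *\<^sub>R H1 w + d *\<^sub>R H2 w) (tens4 T) [x0, x1, x2, x3]
       = c * endo_act H1 (tens4 T) [x0, x1, x2, x3] + d * endo_act H2 (tens4 T) [x0, x1, x2, x3]"
  by (simp add: endo_act_4 tens4_def assms algebra_simps)

lemma length_eq_4E:
  assumes "length xs = 4"
  obtains x0 x1 x2 x3 where "xs = [x0, x1, x2, x3]"
  using assms by (auto simp: numeral_eq_Suc length_Suc_conv)

lemma compatible_transfer:
  assumes "compatible T' E' M"
    and "\<And>p X. p \<in> M \<Longrightarrow> \<theta> p (E p X) = E' p (\<theta> p X)"
    and "\<And>p X1 X2 X3 X4. p \<in> M \<Longrightarrow> T p X1 X2 X3 X4 = T' p (\<theta> p X1) (\<theta> p X2) (\<theta> p X3) (\<theta> p X4)"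
  shows "compatible T E M"
  using assms unfolding compatible_def by simp

section \<open>Christoffel symbols and curvature of the Som-Raychaudhuri metric\<close>

text \<open>All components depend on \<open>r = p $ 3\<close> only and are tabulated as functions of \<open>r\<close>.\<close>

definition som_ray_ginv :: "real \<Rightarrow> real \<Rightarrow> real^4^4" where
  "som_ray_ginv a r = (\<chi> i j. if i = 1 \<and> j = 1 then 1 - a^2 * r^2
      else if (i = 1 \<and> j = 2) \<or> (i = 2 \<and> j = 1) then a
      else if i = 2 \<and> j = 2 then - 1 / r^2
      else if (i = 3 \<and> j = 3) \<or> (i = 4 \<and> j = 4) then -1
      else 0)"

lemma ginv_som_ray:
  assumes "p $ 3 \<noteq> 0"
  shows "ginv (som_ray a) p = som_ray_ginv a (p $ 3)"
  unfolding ginv_def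
  by (rule matrix_inv_eq) (use assms in \<open>simp add: vec_eq_iff forall_4 matrix_matrix_mult_def
        sum_4 mat_def som_ray_def som_ray_ginv_def Let_def field_simps eval_nat_numeral\<close>)

definition som_ray_metric_deriv :: "real \<Rightarrow> 4 \<Rightarrow> 4 \<Rightarrow> real \<Rightarrow> real" where
  "som_ray_metric_deriv a j l r =
     (if (j = 1 \<and> l = 2) \<or> (j = 2 \<and> l = 1) then 2 * a * r
      else if j = 2 \<and> l = 2 then - 2 * r + 4 * a^2 * r^3
      else 0)"

lemma pd_som_ray:
  assumes "0 < p $ 3"
  shows "pd (\<lambda>q. som_ray a q $ j $ l) i p = (if i = 3 then som_ray_metric_deriv a j l (p $ 3) else 0)"
proof (rule pd_fun_of_coord[OF assms])
  show "som_ray a q $ j $ l = som_ray a (vector [0, 0, q $ 3, 0]) $ j $ l" for q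
    by (simp add: som_ray_def)
  show "((\<lambda>r. som_ray a (vector [0, 0, r, 0]) $ j $ l) has_real_derivative
          som_ray_metric_deriv a j l (p $ 3)) (at (p $ 3))"
    using exhaust_4[of j] exhaust_4[of l]
    by (auto simp: som_ray_def som_ray_metric_deriv_def intro!: derivative_eq_intros)
qed

definition som_ray_christ :: "real \<Rightarrow> 4 \<Rightarrow> 4 \<Rightarrow> 4 \<Rightarrow> real \<Rightarrow> real" where
  "som_ray_christ a k i j r =
     (if k = 1 \<and> ((i = 1 \<and> j = 3) \<or> (i = 3 \<and> j = 1)) then a^2 * r
      else if k = 1 \<and> ((i = 2 \<and> j = 3) \<or> (i = 3 \<and> j = 2)) then a^3 * r^3
      else if k = 2 \<and> ((i = 1 \<and> j = 3) \<or> (i = 3 \<and> j = 1)) then - a / r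
      else if k = 2 \<and> ((i = 2 \<and> j = 3) \<or> (i = 3 \<and> j = 2)) then 1 / r - a^2 * r
      else if k = 3 \<and> ((i = 1 \<and> j = 2) \<or> (i = 2 \<and> j = 1)) then a * r
      else if k = 3 \<and> i = 2 \<and> j = 2 then - r + 2 * a^2 * r^3
      else 0)"

definition som_ray_christ_deriv :: "real \<Rightarrow> 4 \<Rightarrow> 4 \<Rightarrow> 4 \<Rightarrow> real \<Rightarrow> real" where
  "som_ray_christ_deriv a k i j r =
     (if k = 1 \<and> ((i = 1 \<and> j = 3) \<or> (i = 3 \<and> j = 1)) then a^2
      else if k = 1 \<and> ((i = 2 \<and> j = 3) \<or> (i = 3 \<and> j = 2)) then 3 * a^3 * r^2
      else if k = 2 \<and> ((i = 1 \<and> j = 3) \<or> (i = 3 \<and> j = 1)) then a / r^2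
      else if k = 2 \<and> ((i = 2 \<and> j = 3) \<or> (i = 3 \<and> j = 2)) then - 1 / r^2 - a^2
      else if k = 3 \<and> ((i = 1 \<and> j = 2) \<or> (i = 2 \<and> j = 1)) then a
      else if k = 3 \<and> i = 2 \<and> j = 2 then - 1 + 6 * a^2 * r^2
      else 0)"

lemma christ_som_ray:
  assumes "0 < p $ 3"
  shows "christ (som_ray a) p k i j = som_ray_christ a k i j (p $ 3)"
  using exhaust_4[of k] exhaust_4[of i] exhaust_4[of j] assms
  by (auto simp: christ_def ginv_som_ray pd_som_ray sum_4 som_ray_ginv_def som_ray_metric_deriv_def
      som_ray_christ_def field_simps eval_nat_numeral)

lemma som_ray_christ_has_deriv:
  assumes "0 < r"
  shows "(som_ray_christ a k i j has_real_derivative som_ray_christ_deriv a k i j r) (at r)"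
proof -
  have "\<forall>k i j. (som_ray_christ a k i j has_real_derivative som_ray_christ_deriv a k i j r) (at r)"
    unfolding forall_4
    by (intro conjI; simp add: som_ray_christ_def[abs_def] som_ray_christ_deriv_def;
        use assms in \<open>auto intro!: derivative_eq_intros simp: power2_eq_square\<close>)
  then show ?thesis by blast
qed

lemma pd_christ_som_ray:
  assumes "0 < p $ 3"
  shows "pd (\<lambda>q. christ (som_ray a) q l j k) i p = (if i = 3 then som_ray_christ_deriv a l j k (p $ 3) else 0)"
  by (rule pd_fun_of_coord[OF assms _ som_ray_christ_has_deriv[OF assms]]) (simp add: christ_som_ray)

definition som_ray_riemann :: "real \<Rightarrow> 4 \<Rightarrow> 4 \<Rightarrow> 4 \<Rightarrow> 4 \<Rightarrow> real \<Rightarrow> real" where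
  "som_ray_riemann a i j k l r =
     (if i = 1 \<and> j = 2 \<and> k = 1 \<and> l = 1 then a^3 * r^2
      else if i = 1 \<and> j = 2 \<and> k = 1 \<and> l = 2 then - (a^2)
      else if i = 1 \<and> j = 2 \<and> k = 2 \<and> l = 1 then a^4 * r^4 - a^2 * r^2
      else if i = 1 \<and> j = 2 \<and> k = 2 \<and> l = 2 then - (a^3 * r^2)
      else if i = 1 \<and> j = 3 \<and> k = 1 \<and> l = 3 then - (a^2)
      else if i = 1 \<and> j = 3 \<and> k = 2 \<and> l = 3 then - (a^3 * r^2)
      else if i = 1 \<and> j = 3 \<and> k = 3 \<and> l = 1 then - (a^2)
      else if i = 2 \<and> j = 1 \<and> k = 1 \<and> l = 1 then - (a^3 * r^2)
      else if i = 2 \<and> j = 1 \<and> k = 1 \<and> l = 2 then a^2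
      else if i = 2 \<and> j = 1 \<and> k = 2 \<and> l = 1 then a^2 * r^2 - a^4 * r^4
      else if i = 2 \<and> j = 1 \<and> k = 2 \<and> l = 2 then a^3 * r^2
      else if i = 2 \<and> j = 3 \<and> k = 1 \<and> l = 3 then - (a^3 * r^2)
      else if i = 2 \<and> j = 3 \<and> k = 2 \<and> l = 3 then - 3 * a^2 * r^2 - a^4 * r^4
      else if i = 2 \<and> j = 3 \<and> k = 3 \<and> l = 1 then - 4 * a^3 * r^2
      else if i = 2 \<and> j = 3 \<and> k = 3 \<and> l = 2 then 3 * a^2
      else if i = 3 \<and> j = 1 \<and> k = 1 \<and> l = 3 then a^2
      else if i = 3 \<and> j = 1 \<and> k = 2 \<and> l = 3 then a^3 * r^2
      else if i = 3 \<and> j = 1 \<and> k = 3 \<and> l = 1 then a^2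
      else if i = 3 \<and> j = 2 \<and> k = 1 \<and> l = 3 then a^3 * r^2
      else if i = 3 \<and> j = 2 \<and> k = 2 \<and> l = 3 then 3 * a^2 * r^2 + a^4 * r^4
      else if i = 3 \<and> j = 2 \<and> k = 3 \<and> l = 1 then 4 * a^3 * r^2
      else if i = 3 \<and> j = 2 \<and> k = 3 \<and> l = 2 then - 3 * a^2
      else 0)"

lemma rcomp_som_ray:
  assumes "0 < p $ 3"
  shows "rcomp (som_ray a) p i j k l = som_ray_riemann a i j k l (p $ 3)"
proof -
  have "\<forall>i j k l. rcomp (som_ray a) p i j k l = som_ray_riemann a i j k l (p $ 3)"
    unfolding forall_4
    by (intro conjI; simp add: rcomp_def pd_christ_som_ray[OF assms] christ_som_ray[OF assms] sum_4;
        simp add: som_ray_christ_def som_ray_christ_deriv_def som_ray_riemann_def;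
        use assms in \<open>simp add: field_simps eval_nat_numeral\<close>)
  then show ?thesis by blast
qed

section \<open>The coframe\<close>

text \<open>\<open>coframe a r V\<close> lists \<open>\<theta>\<^sup>1(V), \<dots>, \<theta>\<^sup>4(V)\<close>.\<close>

definition coframe :: "real \<Rightarrow> real \<Rightarrow> real^4 \<Rightarrow> real^4" where
  "coframe a r V = vector [V $ 1 + a * r^2 * V $ 2, r * V $ 2, V $ 3, V $ 4]"

lemma coframe_component [simp]:
  "coframe a r V $ 1 = V $ 1 + a * r^2 * V $ 2" "coframe a r V $ 2 = r * V $ 2"
  "coframe a r V $ 3 = V $ 3" "coframe a r V $ 4 = V $ 4"
  by (simp_all add: coframe_def)

lemma coframe_add: "coframe a r (X + Y) = coframe a r X + coframe a r Y"
  and coframe_diff: "coframe a r (X - Y) = coframe a r X - coframe a r Y"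
  and coframe_scaleR: "coframe a r (c *\<^sub>R X) = c *\<^sub>R coframe a r X"
  by (simp_all add: vec_eq_iff forall_4 algebra_simps)

definition minkowski :: "real^4 \<Rightarrow> real^4 \<Rightarrow> real" where
  "minkowski u v = u $ 1 * v $ 1 - u $ 2 * v $ 2 - u $ 3 * v $ 3 - u $ 4 * v $ 4"

definition frame_ricci :: "real \<Rightarrow> real^4 \<Rightarrow> real^4 \<Rightarrow> real" where
  "frame_ricci a u v = 2 * a^2 * (u $ 1 * v $ 1 + u $ 2 * v $ 2 + u $ 3 * v $ 3)"

definition frame_ricop :: "real \<Rightarrow> real^4 \<Rightarrow> real^4" where
  "frame_ricop a u = vector [2 * a^2 * u $ 1, - 2 * a^2 * u $ 2, - 2 * a^2 * u $ 3, 0]"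

definition frame_curv :: "real \<Rightarrow> real^4 \<Rightarrow> real^4 \<Rightarrow> real^4 \<Rightarrow> real^4" where
  "frame_curv a u v w = vector
     [a^2 * ((u $ 2 * v $ 1 - u $ 1 * v $ 2) * w $ 2 + (u $ 3 * v $ 1 - u $ 1 * v $ 3) * w $ 3),
      a^2 * (u $ 2 * v $ 1 - u $ 1 * v $ 2) * w $ 1 + 3 * a^2 * (u $ 2 * v $ 3 - u $ 3 * v $ 2) * w $ 3,
      a^2 * (u $ 3 * v $ 1 - u $ 1 * v $ 3) * w $ 1 + 3 * a^2 * (u $ 3 * v $ 2 - u $ 2 * v $ 3) * w $ 2,
      0]"

lemma gform_som_ray: "gform (som_ray a) p X Y = minkowski (coframe a (p $ 3) X) (coframe a (p $ 3) Y)"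
  by (simp add: gform_def minkowski_def sum_4 som_ray_def Let_def algebra_simps power2_eq_square eval_nat_numeral)

lemma coframe_curv_som_ray:
  assumes "0 < p $ 3"
  shows "coframe a (p $ 3) (curv (som_ray a) p X Y Z)
       = frame_curv a (coframe a (p $ 3) X) (coframe a (p $ 3) Y) (coframe a (p $ 3) Z)"
  unfolding vec_eq_iff forall_4
  by (simp add: curv_def sum_4 rcomp_som_ray[OF assms] frame_curv_def som_ray_riemann_def;
      simp add: algebra_simps power2_eq_square eval_nat_numeral)

lemma ricci_som_ray:
  assumes "0 < p $ 3"
  shows "ricci (som_ray a) p X Y = frame_ricci a (coframe a (p $ 3) X) (coframe a (p $ 3) Y)"
  by (simp add: ricci_def curv_def sum_4 rcomp_som_ray[OF assms] frame_ricci_def som_ray_riemann_def;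
      simp add: algebra_simps power2_eq_square eval_nat_numeral)

lemma coframe_ricop_som_ray:
  assumes "0 < p $ 3"
  shows "coframe a (p $ 3) (ricop (som_ray a) p Y) = frame_ricop a (coframe a (p $ 3) Y)"
  using assms unfolding vec_eq_iff forall_4
  by (simp add: ricop_def ginv_som_ray ricci_som_ray matrix_vector_mult_def sum_4 som_ray_ginv_def
      frame_ricop_def frame_ricci_def field_simps power2_eq_square eval_nat_numeral)

lemma scal_som_ray:
  assumes "0 < p $ 3"
  shows "scal (som_ray a) p = - 2 * a^2"
  using assms
  by (simp add: scal_def ginv_som_ray ricci_som_ray sum_4 som_ray_ginv_def frame_ricci_def
      field_simps power2_eq_square eval_nat_numeral)

text \<open>The frame forms of the Weyl, concircular and conharmonic operators, with \<open>n = 4\<close> and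
  \<open>\<kappa> = -2a\<^sup>2\<close> substituted.\<close>

definition frame_lower :: "(real^4 \<Rightarrow> real^4 \<Rightarrow> real^4 \<Rightarrow> real^4)
    \<Rightarrow> real^4 \<Rightarrow> real^4 \<Rightarrow> real^4 \<Rightarrow> real^4 \<Rightarrow> real" where
  "frame_lower H u v w z = minkowski (H u v w) z"

definition frame_weylop :: "real \<Rightarrow> real^4 \<Rightarrow> real^4 \<Rightarrow> real^4 \<Rightarrow> real^4" where
  "frame_weylop a u v w = frame_curv a u v w - (1/2) *\<^sub>R
     (wedge minkowski u (frame_ricop a v) w + wedge minkowski (frame_ricop a u) v w
      - (- 2 * a^2 / 3) *\<^sub>R wedge minkowski u v w)"

definition frame_concop :: "real \<Rightarrow> real^4 \<Rightarrow> real^4 \<Rightarrow> real^4 \<Rightarrow> real^4" where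
  "frame_concop a u v w = frame_curv a u v w - (- 2 * a^2 / 12) *\<^sub>R wedge minkowski u v w"

definition frame_conhop :: "real \<Rightarrow> real^4 \<Rightarrow> real^4 \<Rightarrow> real^4 \<Rightarrow> real^4" where
  "frame_conhop a u v w = frame_curv a u v w - (1/2) *\<^sub>R
     (wedge minkowski u (frame_ricop a v) w + wedge minkowski (frame_ricop a u) v w)"

lemma coframe_wedge:
  assumes "\<And>X Y. A X Y = B (coframe a r X) (coframe a r Y)"
  shows "coframe a r (wedge A X Y Z) = wedge B (coframe a r X) (coframe a r Y) (coframe a r Z)"
  by (simp add: wedge_def coframe_diff coframe_scaleR assms)

lemma dimr_4: "dimr TYPE(4) = 4"
  by (simp add: dimr_def)

context
  fixes a :: real and p :: "real^4"
  assumes p: "0 < p $ 3"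
begin

lemma coframe_weylop_som_ray:
  "coframe a (p $ 3) (weylop (som_ray a) p X Y Z)
   = frame_weylop a (coframe a (p $ 3) X) (coframe a (p $ 3) Y) (coframe a (p $ 3) Z)"
  by (simp add: weylop_def frame_weylop_def dimr_4 coframe_diff coframe_add coframe_scaleR
      coframe_wedge[where B = minkowski, OF gform_som_ray] coframe_curv_som_ray[OF p]
      coframe_ricop_som_ray[OF p] scal_som_ray[OF p])

lemma coframe_concop_som_ray:
  "coframe a (p $ 3) (concop (som_ray a) p X Y Z)
   = frame_concop a (coframe a (p $ 3) X) (coframe a (p $ 3) Y) (coframe a (p $ 3) Z)"
  by (simp add: concop_def frame_concop_def dimr_4 coframe_diff coframe_add coframe_scaleR
      coframe_wedge[where B = minkowski, OF gform_som_ray] coframe_curv_som_ray[OF p] scal_som_ray[OF p])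

lemma coframe_conhop_som_ray:
  "coframe a (p $ 3) (conhop (som_ray a) p X Y Z)
   = frame_conhop a (coframe a (p $ 3) X) (coframe a (p $ 3) Y) (coframe a (p $ 3) Z)"
  by (simp add: conhop_def frame_conhop_def dimr_4 coframe_diff coframe_add coframe_scaleR
      coframe_wedge[where B = minkowski, OF gform_som_ray] coframe_curv_som_ray[OF p]
      coframe_ricop_som_ray[OF p])

lemma Rtens_som_ray: "Rtens (som_ray a) p X1 X2 X3 X4
    = frame_lower (frame_curv a) (coframe a (p $ 3) X1) (coframe a (p $ 3) X2)
        (coframe a (p $ 3) X3) (coframe a (p $ 3) X4)"
  and Ctens_som_ray: "Ctens (som_ray a) p X1 X2 X3 X4
    = frame_lower (frame_weylop a) (coframe a (p $ 3) X1) (coframe a (p $ 3) X2)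
        (coframe a (p $ 3) X3) (coframe a (p $ 3) X4)"
  and Wtens_som_ray: "Wtens (som_ray a) p X1 X2 X3 X4
    = frame_lower (frame_concop a) (coframe a (p $ 3) X1) (coframe a (p $ 3) X2)
        (coframe a (p $ 3) X3) (coframe a (p $ 3) X4)"
  and Ktens_som_ray: "Ktens (som_ray a) p X1 X2 X3 X4
    = frame_lower (frame_conhop a) (coframe a (p $ 3) X1) (coframe a (p $ 3) X2)
        (coframe a (p $ 3) X3) (coframe a (p $ 3) X4)"
  by (simp_all add: Rtens_def Ctens_def Wtens_def Ktens_def frame_lower_def gform_som_ray
      coframe_curv_som_ray[OF p] coframe_weylop_som_ray coframe_concop_som_ray coframe_conhop_som_ray)

end

section \<open>The covariant derivative of the Ricci tensor\<close>

definition som_ray_ricci_deriv :: "real \<Rightarrow> 4 \<Rightarrow> 4 \<Rightarrow> real \<Rightarrow> real" where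
  "som_ray_ricci_deriv a j k r =
     (if (j = 1 \<and> k = 2) \<or> (j = 2 \<and> k = 1) then 4 * a^3 * r
      else if j = 2 \<and> k = 2 then 4 * a^2 * r + 8 * a^4 * r^3
      else 0)"

lemma pd_ricci_som_ray:
  assumes "0 < p $ 3"
  shows "pd (\<lambda>q. ricci (som_ray a) q (ev j) (ev k)) i p
       = (if i = 3 then som_ray_ricci_deriv a j k (p $ 3) else 0)"
proof (rule pd_fun_of_coord[OF assms])
  show "ricci (som_ray a) q (ev j) (ev k) = frame_ricci a (coframe a (q $ 3) (ev j)) (coframe a (q $ 3) (ev k))"
    if "0 < q $ 3" for q
    using that by (rule ricci_som_ray)
  show "((\<lambda>r. frame_ricci a (coframe a r (ev j)) (coframe a r (ev k))) has_real_derivative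
          som_ray_ricci_deriv a j k (p $ 3)) (at (p $ 3))"
    using exhaust_4[of j] exhaust_4[of k]
    by (auto simp: frame_ricci_def som_ray_ricci_deriv_def algebra_simps power2_eq_square eval_nat_numeral
        intro!: derivative_eq_intros)
qed

definition som_ray_nabla_ricci :: "real \<Rightarrow> 4 \<Rightarrow> 4 \<Rightarrow> 4 \<Rightarrow> real \<Rightarrow> real" where
  "som_ray_nabla_ricci a i j k r =
     (if i = 2 \<and> ((j = 1 \<and> k = 3) \<or> (j = 3 \<and> k = 1)) then - 4 * a^3 * r
      else if i = 2 \<and> ((j = 2 \<and> k = 3) \<or> (j = 3 \<and> k = 2)) then - 4 * a^4 * r^3
      else if i = 3 \<and> ((j = 1 \<and> k = 2) \<or> (j = 2 \<and> k = 1)) then 4 * a^3 * r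
      else if i = 3 \<and> j = 2 \<and> k = 2 then 8 * a^4 * r^3
      else 0)"

lemma nablaS_comp_som_ray:
  assumes "0 < p $ 3"
  shows "nablaS_comp (som_ray a) p i j k = som_ray_nabla_ricci a i j k (p $ 3)"
proof -
  have "\<forall>i j k. nablaS_comp (som_ray a) p i j k = som_ray_nabla_ricci a i j k (p $ 3)"
    unfolding forall_4
    by (intro conjI; simp add: nablaS_comp_def pd_ricci_som_ray[OF assms] christ_som_ray[OF assms]
          ricci_som_ray[OF assms] sum_4;
        simp add: som_ray_christ_def frame_ricci_def som_ray_ricci_deriv_def som_ray_nabla_ricci_def;
        use assms in \<open>simp add: field_simps eval_nat_numeral\<close>)
  then show ?thesis by blast
qed

lemma cyclic_parallel_ricci_som_ray: "cyclic_parallel_ricci (som_ray a) som_ray_domain"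
  unfolding cyclic_parallel_ricci_def som_ray_domain_def
  by (auto simp: nablaS_def nablaS_comp_som_ray sum_4 som_ray_nabla_ricci_def)

section \<open>Curvature identities in the coframe\<close>

lemma frame_curv_ricci_pseudosymmetric:
  "endo_act (frame_curv a u v) (tens4 (frame_lower (frame_curv a))) [x0, x1, x2, x3]
   = endo_act (wedge (frame_ricci a) u v) (tens4 (frame_lower (frame_curv a))) [x0, x1, x2, x3]"
  by (simp add: endo_act_4 tens4_def frame_lower_def frame_curv_def wedge_def frame_ricci_def
      minkowski_def algebra_simps)

lemma frame_ricop_compatible:
  "compatible (\<lambda>_. frame_lower (frame_curv a)) (\<lambda>_. frame_ricop a) M"
  "compatible (\<lambda>_. frame_lower (frame_weylop a)) (\<lambda>_. frame_ricop a) M"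
  "compatible (\<lambda>_. frame_lower (frame_concop a)) (\<lambda>_. frame_ricop a) M"
  "compatible (\<lambda>_. frame_lower (frame_conhop a)) (\<lambda>_. frame_ricop a) M"
  by (simp_all add: compatible_def frame_lower_def frame_weylop_def frame_concop_def frame_conhop_def
      frame_curv_def frame_ricop_def wedge_def minkowski_def algebra_simps)

lemma frame_ricci_cubic: "frame_ricci a u (frame_ricop a (frame_ricop a v)) = 4 * a^4 * frame_ricci a u v"
  by (simp add: frame_ricci_def frame_ricop_def algebra_simps)

lemma frame_curv_roter:
  assumes "a \<noteq> 0"
  shows "frame_lower (frame_curv a) x1 x2 x3 x4 =
       a^2 / 2 * kn minkowski minkowski x1 x2 x3 x4
     - 1 / (4 * a^2) * kn (frame_ricci a) (frame_ricci a) x1 x2 x3 x4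
     - 1 / (4 * a^2) * kn minkowski (\<lambda>u v. frame_ricci a u (frame_ricop a v)) x1 x2 x3 x4"
  using assms unfolding frame_lower_def minkowski_def frame_curv_def frame_ricop_def frame_ricci_def kn_def
  by (simp add: field_simps) algebra

lemma frame_ricci_chaki_form:
  assumes "s * s = 2"
  shows "frame_ricci a u v = - 2 * a^2 * minkowski u v
     + 6 * a^2 * ((s * u $ 1 + u $ 4) * (s * v $ 1 + v $ 4))
     + - 2 * s * a^2 * ((s * u $ 1 + u $ 4) * (v $ 1 + s * v $ 4) + (u $ 1 + s * u $ 4) * (s * v $ 1 + v $ 4))"
proof -
  have s: "s * (s * z) = 2 * z" for z
    using assms by (metis mult.assoc)
  show ?thesis
    by (simp add: frame_ricci_def minkowski_def algebra_simps s power2_eq_square)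
qed

text \<open>The frame Weyl operator is \<open>2a\<^sup>2/3\<close> times \<open>X \<and>\<^sub>g Y\<close> plus an infinitesimal boost in the
  \<open>(\<theta>\<^sup>1, \<theta>\<^sup>4)\<close>-plane and a rotation in the \<open>(\<theta>\<^sup>2, \<theta>\<^sup>3)\<close>-plane, and both of these annihilate the
  Weyl tensor.\<close>

definition frame_boost :: "real^4 \<Rightarrow> real^4" where
  "frame_boost w = vector [w $ 4, 0, 0, w $ 1]"

definition frame_rotation :: "real^4 \<Rightarrow> real^4" where
  "frame_rotation w = vector [0, w $ 3, - w $ 2, 0]"

lemma frame_weylop_decomp:
  "frame_weylop a u v w = (2 * a^2 / 3) *\<^sub>R wedge minkowski u v w
     + (2 * a^2 * (u $ 1 * v $ 4 - u $ 4 * v $ 1)) *\<^sub>R frame_boost w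
     + (2 * a^2 * (u $ 2 * v $ 3 - u $ 3 * v $ 2)) *\<^sub>R frame_rotation w"
  unfolding vec_eq_iff forall_4
  by (simp add: frame_weylop_def frame_curv_def wedge_def frame_ricop_def minkowski_def
      frame_boost_def frame_rotation_def field_simps)

lemma frame_weyl_multilinear:
  fixes a :: real and T defines "T \<equiv> frame_lower (frame_weylop a)"
  shows "T (c *\<^sub>R x + d *\<^sub>R y) v w z = c * T x v w z + d * T y v w z"
    and "T v (c *\<^sub>R x + d *\<^sub>R y) w z = c * T v x w z + d * T v y w z"
    and "T v w (c *\<^sub>R x + d *\<^sub>R y) z = c * T v w x z + d * T v w y z"
    and "T v w z (c *\<^sub>R x + d *\<^sub>R y) = c * T v w z x + d * T v w z y"
  unfolding T_def frame_lower_def frame_weylop_decomp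
  by (simp_all add: wedge_def minkowski_def frame_boost_def frame_rotation_def field_simps)

lemma endo_act_frame_weyl_symmetries:
  "endo_act frame_boost (tens4 (frame_lower (frame_weylop a))) [x0, x1, x2, x3] = 0"
  "endo_act frame_rotation (tens4 (frame_lower (frame_weylop a))) [x0, x1, x2, x3] = 0"
  by (simp_all add: endo_act_4 tens4_def frame_lower_def frame_weylop_decomp wedge_def minkowski_def
      frame_boost_def frame_rotation_def algebra_simps)

lemma frame_weyl_pseudosymmetric:
  "endo_act (frame_weylop a u v) (tens4 (frame_lower (frame_weylop a))) [x0, x1, x2, x3]
   = (2 * a^2 / 3) * endo_act (wedge minkowski u v) (tens4 (frame_lower (frame_weylop a))) [x0, x1, x2, x3]"
proof -
  note lincomb = endo_act_tens4_lincomb[OF frame_weyl_multilinear]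
  have "frame_weylop a u v = (\<lambda>w. (2 * a^2 / 3) *\<^sub>R wedge minkowski u v w
     + 1 *\<^sub>R ((2 * a^2 * (u $ 1 * v $ 4 - u $ 4 * v $ 1)) *\<^sub>R frame_boost w
     + (2 * a^2 * (u $ 2 * v $ 3 - u $ 3 * v $ 2)) *\<^sub>R frame_rotation w))"
    by (simp add: fun_eq_iff frame_weylop_decomp add.assoc)
  then show ?thesis
    by (simp only: lincomb endo_act_frame_weyl_symmetries) simp
qed

section \<open>The curvature conditions\<close>

lemma som_ray_domainD: "p \<in> som_ray_domain \<Longrightarrow> 0 < p $ 3"
  by (simp add: som_ray_domain_def)

lemma Uset_som_rayD: "p \<in> Uset G som_ray_domain \<Longrightarrow> 0 < p $ 3"
  by (simp add: Uset_def som_ray_domain_def)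

lemma special_ricci_gen_pseudosym_som_ray: "special_ricci_gen_pseudosym (som_ray a) som_ray_domain"
  unfolding special_ricci_gen_pseudosym_def
proof (intro ballI allI impI)
  fix p and xs :: "(real^4) list" and X Y
  assume "p \<in> som_ray_domain" and "length xs = 4"
  then have p: "0 < p $ 3" and xs: "xs = [xs ! 0, xs ! 1, xs ! 2, xs ! 3]"
    by (auto dest: som_ray_domainD elim: length_eq_4E)
  let ?\<theta> = "coframe a (p $ 3)"
  note transfer = endo_act_tens4_transfer[where \<theta> = ?\<theta>]
  have "endo_act (curv (som_ray a) p X Y) (tens4 (Rtens (som_ray a) p)) xs
      = endo_act (frame_curv a (?\<theta> X) (?\<theta> Y)) (tens4 (frame_lower (frame_curv a)))
          [?\<theta> (xs ! 0), ?\<theta> (xs ! 1), ?\<theta> (xs ! 2), ?\<theta> (xs ! 3)]"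
    by (subst xs, rule transfer) (simp_all add: coframe_curv_som_ray[OF p] Rtens_som_ray[OF p])
  also have "\<dots> = endo_act (wedge (frame_ricci a) (?\<theta> X) (?\<theta> Y)) (tens4 (frame_lower (frame_curv a)))
          [?\<theta> (xs ! 0), ?\<theta> (xs ! 1), ?\<theta> (xs ! 2), ?\<theta> (xs ! 3)]"
    by (rule frame_curv_ricci_pseudosymmetric)
  also have "\<dots> = endo_act (wedge (ricci (som_ray a) p) X Y) (tens4 (Rtens (som_ray a) p)) xs"
    by (subst xs, rule transfer[symmetric])
      (simp_all add: coframe_wedge[where B = "frame_ricci a", OF ricci_som_ray[OF p]] Rtens_som_ray[OF p])
  finally show "endo_act (curv (som_ray a) p X Y) (tens4 (Rtens (som_ray a) p)) xs =
        endo_act (wedge (ricci (som_ray a) p) X Y) (tens4 (Rtens (som_ray a) p)) xs" .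
qed

lemma weyl_pseudosym_som_ray: "weyl_pseudosym (som_ray a) som_ray_domain"
  unfolding weyl_pseudosym_def
proof (intro exI[of _ "\<lambda>_. 2 * a^2 / 3"] conjI smooth_fun_const ballI allI impI)
  fix p and xs :: "(real^4) list" and X Y
  assume "p \<in> som_ray_domain" and "length xs = 4"
  then have p: "0 < p $ 3" and xs: "xs = [xs ! 0, xs ! 1, xs ! 2, xs ! 3]"
    by (auto dest: som_ray_domainD elim: length_eq_4E)
  let ?\<theta> = "coframe a (p $ 3)" and ?C = "tens4 (frame_lower (frame_weylop a))"
  let ?\<theta>xs = "[?\<theta> (xs ! 0), ?\<theta> (xs ! 1), ?\<theta> (xs ! 2), ?\<theta> (xs ! 3)]"
  note transfer = endo_act_tens4_transfer[where \<theta> = ?\<theta>]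
  have "endo_act (weylop (som_ray a) p X Y) (tens4 (Ctens (som_ray a) p)) xs
      = endo_act (frame_weylop a (?\<theta> X) (?\<theta> Y)) ?C ?\<theta>xs"
    by (subst xs, rule transfer) (simp_all add: coframe_weylop_som_ray[OF p] Ctens_som_ray[OF p])
  moreover have "endo_act (wedge (gform (som_ray a) p) X Y) (tens4 (Ctens (som_ray a) p)) xs
      = endo_act (wedge minkowski (?\<theta> X) (?\<theta> Y)) ?C ?\<theta>xs"
    by (subst xs, rule transfer)
      (simp_all add: coframe_wedge[where B = minkowski, OF gform_som_ray] Ctens_som_ray[OF p])
  ultimately show "endo_act (weylop (som_ray a) p X Y) (tens4 (Ctens (som_ray a) p)) xs
      = 2 * a^2 / 3 * endo_act (wedge (gform (som_ray a) p) X Y) (tens4 (Ctens (som_ray a) p)) xs"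
    by (simp only: frame_weyl_pseudosymmetric)
qed

lemma ricop_compatible_som_ray:
  shows "compatible (Rtens (som_ray a)) (ricop (som_ray a)) som_ray_domain"
    and "compatible (Ctens (som_ray a)) (ricop (som_ray a)) som_ray_domain"
    and "compatible (Wtens (som_ray a)) (ricop (som_ray a)) som_ray_domain"
    and "compatible (Ktens (som_ray a)) (ricop (som_ray a)) som_ray_domain"
proof -
  have "coframe a (p $ 3) (ricop (som_ray a) p X) = frame_ricop a (coframe a (p $ 3) X)"
    if "p \<in> som_ray_domain" for p X
    using that by (simp add: coframe_ricop_som_ray som_ray_domainD)
  note transfer =
    compatible_transfer[where \<theta> = "\<lambda>p. coframe a (p $ 3)" and E' = "\<lambda>_. frame_ricop a", OF _ this]
  show "compatible (Rtens (som_ray a)) (ricop (som_ray a)) som_ray_domain"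
    by (rule transfer[OF frame_ricop_compatible(1)]) (auto dest: som_ray_domainD simp: Rtens_som_ray)
  show "compatible (Ctens (som_ray a)) (ricop (som_ray a)) som_ray_domain"
    by (rule transfer[OF frame_ricop_compatible(2)]) (auto dest: som_ray_domainD simp: Ctens_som_ray)
  show "compatible (Wtens (som_ray a)) (ricop (som_ray a)) som_ray_domain"
    by (rule transfer[OF frame_ricop_compatible(3)]) (auto dest: som_ray_domainD simp: Wtens_som_ray)
  show "compatible (Ktens (som_ray a)) (ricop (som_ray a)) som_ray_domain"
    by (rule transfer[OF frame_ricop_compatible(4)]) (auto dest: som_ray_domainD simp: Ktens_som_ray)
qed

lemma ein3_som_ray: "ein3 (som_ray a) som_ray_domain"
proof -
  have "ricci3 (som_ray a) p X Y + 0 * ricci2 (som_ray a) p X Y + - 4 * a^4 * ricci (som_ray a) p X Y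
        + 0 * gform (som_ray a) p X Y = 0" if "p \<in> som_ray_domain" for p X Y
    using som_ray_domainD[OF that]
    by (simp add: ricci3_def ricci_som_ray coframe_ricop_som_ray frame_ricci_cubic)
  then show ?thesis
    unfolding ein3_def by (blast intro: smooth_fun_const)
qed

lemma gen_roter_som_ray:
  assumes "a \<noteq> 0"
  shows "gen_roter (som_ray a) som_ray_domain"
proof -
  have "Rtens (som_ray a) p X1 X2 X3 X4 =
          a^2 / 2 * kn (gform (som_ray a) p) (gform (som_ray a) p) X1 X2 X3 X4
        + 0 * kn (gform (som_ray a) p) (ricci (som_ray a) p) X1 X2 X3 X4
        + - 1 / (4 * a^2) * kn (ricci (som_ray a) p) (ricci (som_ray a) p) X1 X2 X3 X4
        + - 1 / (4 * a^2) * kn (gform (som_ray a) p) (ricci2 (som_ray a) p) X1 X2 X3 X4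
        + 0 * kn (ricci (som_ray a) p) (ricci2 (som_ray a) p) X1 X2 X3 X4
        + 0 * kn (ricci2 (som_ray a) p) (ricci2 (som_ray a) p) X1 X2 X3 X4"
    if "p \<in> som_ray_domain" for p X1 X2 X3 X4
  proof -
    have p: "0 < p $ 3" using that by (rule som_ray_domainD)
    show ?thesis
      unfolding Rtens_som_ray[OF p] frame_curv_roter[OF assms]
      by (simp add: kn_def gform_som_ray ricci2_def ricci_som_ray[OF p] coframe_ricop_som_ray[OF p])
  qed
  then show ?thesis
    unfolding gen_roter_def by (blast intro: smooth_fun_const)
qed

lemma k_quasi_einstein_2_som_ray:
  assumes "a \<noteq> 0"
  shows "k_quasi_einstein 2 (som_ray a) som_ray_domain"
proof -
  have "rank (\<chi> i j. ricci (som_ray a) p (ev i) (ev j) - (- 2 * a^2) * som_ray a p $ i $ j) = 2"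
    if "p \<in> som_ray_domain" for p
  proof (rule rank_orthogonal_dyads)
    have p: "0 < p $ 3" using that by (rule som_ray_domainD)
    show "(\<chi> i j. ricci (som_ray a) p (ev i) (ev j) - (- 2 * a^2) * som_ray a p $ i $ j) *v x
        = (4 * a^2 * (vector [1, a * (p $ 3)^2, 0, 0] \<bullet> x)) *\<^sub>R vector [1, a * (p $ 3)^2, 0, 0]
          + (- 2 * a^2 * (ev 4 \<bullet> x)) *\<^sub>R ev 4" for x :: "real^4"
      unfolding vec_eq_iff forall_4
      by (simp add: matrix_vector_mult_def sum_4 ricci_som_ray[OF p] frame_ricci_def som_ray_def Let_def
          inner_vec_def algebra_simps power2_eq_square eval_nat_numeral)
    show "vector [1, a * (p $ 3)^2, 0, 0] \<noteq> (0 :: real^4)"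
      by (metis vector_4(1) zero_index zero_neq_one)
  qed (use assms in \<open>simp_all add: inner_vec_def sum_4 vec_eq_iff\<close>)
  then show ?thesis
    unfolding k_quasi_einstein_def by (blast intro: smooth_fun_const)
qed

lemma gqe_de_ghosh_som_ray: "gqe_de_ghosh (som_ray a) som_ray_domain"
proof -
  \<comment> \<open>\<open>\<pi> = \<theta>\<^sup>1\<close> and \<open>\<phi> = \<theta>\<^sup>4\<close>\<close>
  define \<pi> :: "real^4 \<Rightarrow> real^4" where "\<pi> p = vector [1, a * (p $ 3)^2, 0, 0]" for p
  define \<phi> :: "real^4 \<Rightarrow> real^4" where "\<phi> p = vector [0, 0, 0, 1]" for p
  have "smooth_field U \<pi>" "smooth_field U \<phi>" for U
    unfolding \<pi>_def \<phi>_def by (simp_all add: smooth_field_vector4 smooth_fun_const smooth_fun_coord_square)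
  moreover have "gform (som_ray a) p (ginv (som_ray a) p *v \<pi> p) (ginv (som_ray a) p *v \<phi> p) = 0 \<and>
     (\<forall>X Y. ricci (som_ray a) p X Y = - 2 * a^2 * gform (som_ray a) p X Y
        + 4 * a^2 * ((\<pi> p \<bullet> X) * (\<pi> p \<bullet> Y)) + - 2 * a^2 * ((\<phi> p \<bullet> X) * (\<phi> p \<bullet> Y)))"
    if "p \<in> Uset (som_ray a) som_ray_domain" for p
  proof -
    have p: "0 < p $ 3" using that by (rule Uset_som_rayD)
    then show ?thesis
      by (simp add: \<pi>_def \<phi>_def ginv_som_ray gform_def sum_4 som_ray_ginv_def matrix_vector_mult_def
          som_ray_def Let_def
          ricci_som_ray gform_som_ray frame_ricci_def minkowski_def inner_vec_def algebra_simps
          power2_eq_square eval_nat_numeral)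
  qed
  ultimately show ?thesis
    unfolding gqe_de_ghosh_def Let_def by (blast intro: smooth_fun_const)
qed

lemma gqe_chaki_som_ray: "gqe_chaki (som_ray a) som_ray_domain"
proof -
  \<comment> \<open>\<open>\<pi> = \<surd>2 \<theta>\<^sup>1 + \<theta>\<^sup>4\<close> and \<open>\<phi> = \<theta>\<^sup>1 + \<surd>2 \<theta>\<^sup>4\<close>\<close>
  define \<pi> :: "real^4 \<Rightarrow> real^4" where "\<pi> p = vector [sqrt 2, sqrt 2 * a * (p $ 3)^2, 0, 1]" for p
  define \<phi> :: "real^4 \<Rightarrow> real^4" where "\<phi> p = vector [1, a * (p $ 3)^2, 0, sqrt 2]" for p
  have "smooth_field U \<pi>" "smooth_field U \<phi>" for U
    unfolding \<pi>_def \<phi>_def by (simp_all add: smooth_field_vector4 smooth_fun_const smooth_fun_coord_square)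
  moreover have "gform (som_ray a) p (ginv (som_ray a) p *v \<pi> p) (ginv (som_ray a) p *v \<phi> p) = 0 \<and>
     (\<forall>X Y. ricci (som_ray a) p X Y = - 2 * a^2 * gform (som_ray a) p X Y
        + 6 * a^2 * ((\<pi> p \<bullet> X) * (\<pi> p \<bullet> Y))
        + - 2 * sqrt 2 * a^2 * ((\<pi> p \<bullet> X) * (\<phi> p \<bullet> Y) + (\<phi> p \<bullet> X) * (\<pi> p \<bullet> Y)))"
    if "p \<in> Uset (som_ray a) som_ray_domain" for p
  proof (intro conjI allI)
    have p: "0 < p $ 3" using that by (rule Uset_som_rayD)
    show "gform (som_ray a) p (ginv (som_ray a) p *v \<pi> p) (ginv (som_ray a) p *v \<phi> p) = 0"
      using p by (simp add: \<pi>_def \<phi>_def ginv_som_ray gform_def sum_4 som_ray_ginv_def matrix_vector_mult_def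
          som_ray_def Let_def field_simps power2_eq_square)
    fix X Y :: "real^4"
    have "\<pi> p \<bullet> Z = sqrt 2 * coframe a (p $ 3) Z $ 1 + coframe a (p $ 3) Z $ 4"
      and "\<phi> p \<bullet> Z = coframe a (p $ 3) Z $ 1 + sqrt 2 * coframe a (p $ 3) Z $ 4" for Z
      by (simp_all add: \<pi>_def \<phi>_def inner_vec_def sum_4 algebra_simps)
    then show "ricci (som_ray a) p X Y = - 2 * a^2 * gform (som_ray a) p X Y
        + 6 * a^2 * ((\<pi> p \<bullet> X) * (\<pi> p \<bullet> Y))
        + - 2 * sqrt 2 * a^2 * ((\<pi> p \<bullet> X) * (\<phi> p \<bullet> Y) + (\<phi> p \<bullet> X) * (\<pi> p \<bullet> Y))"
      by (simp add: ricci_som_ray[OF p] gform_som_ray frame_ricci_chaki_form[of "sqrt 2"])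
  qed
  ultimately show ?thesis
    unfolding gqe_chaki_def Let_def by (blast intro: smooth_fun_const)
qed

lemma pseudo_qe_som_ray: "pseudo_qe (som_ray a) som_ray_domain"
proof -
  define \<pi> :: "real^4 \<Rightarrow> real^4" where "\<pi> p = vector [1, a * (p $ 3)^2, 0, 0]" for p
  define c where "c = 2 * a^2 / 3"
  define E :: "real^4 \<Rightarrow> real^4^4" where
    "E p = (\<chi> i j. if i = 2 \<and> j = 2 then c * (p $ 3)^2 else if i = 3 \<and> j = 3 then c
        else if i = 4 \<and> j = 4 then - 2 * c else 0)" for p
  have "smooth_field U \<pi>" for U
    unfolding \<pi>_def by (simp add: smooth_field_vector4 smooth_fun_const smooth_fun_coord_square)
  moreover have "smooth_tensor2 U E" for U
    unfolding smooth_tensor2_def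
  proof (intro allI)
    fix i j :: 4
    show "smooth_fun U (\<lambda>p. E p $ i $ j)"
      using exhaust_4[of i] exhaust_4[of j]
      by (auto simp: E_def smooth_fun_const smooth_fun_coord_square)
  qed
  moreover have "(\<forall>i j. E p $ i $ j = E p $ j $ i) \<and>
       (\<Sum>i\<in>UNIV. \<Sum>j\<in>UNIV. ginv (som_ray a) p $ i $ j * E p $ i $ j) = 0 \<and>
       (\<forall>X. (\<Sum>i\<in>UNIV. \<Sum>j\<in>UNIV. E p $ i $ j * X $ i * (ginv (som_ray a) p *v \<pi> p) $ j) = 0) \<and>
       (\<forall>X Y. ricci (som_ray a) p X Y = - 4 * a^2 / 3 * gform (som_ray a) p X Y
           + 10 * a^2 / 3 * ((\<pi> p \<bullet> X) * (\<pi> p \<bullet> Y))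
           + 1 * (\<Sum>i\<in>UNIV. \<Sum>j\<in>UNIV. E p $ i $ j * X $ i * Y $ j))"
    if "p \<in> Uset (som_ray a) som_ray_domain" for p
  proof (intro conjI allI)
    have p: "0 < p $ 3" using that by (rule Uset_som_rayD)
    have sharp: "ginv (som_ray a) p *v \<pi> p = ev 1"
      using p unfolding vec_eq_iff forall_4
      by (simp add: \<pi>_def ginv_som_ray sum_4 som_ray_ginv_def matrix_vector_mult_def field_simps power2_eq_square)
    show "E p $ i $ j = E p $ j $ i" for i j
      using exhaust_4[of i] exhaust_4[of j] by (auto simp: E_def)
    show "(\<Sum>i\<in>UNIV. \<Sum>j\<in>UNIV. ginv (som_ray a) p $ i $ j * E p $ i $ j) = 0"
      using p by (simp add: ginv_som_ray sum_4 som_ray_ginv_def E_def c_def field_simps power2_eq_square)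
    show "(\<Sum>i\<in>UNIV. \<Sum>j\<in>UNIV. E p $ i $ j * X $ i * (ginv (som_ray a) p *v \<pi> p) $ j) = 0" for X
      by (simp add: sharp sum_4 E_def)
    show "ricci (som_ray a) p X Y = - 4 * a^2 / 3 * gform (som_ray a) p X Y
           + 10 * a^2 / 3 * ((\<pi> p \<bullet> X) * (\<pi> p \<bullet> Y))
           + 1 * (\<Sum>i\<in>UNIV. \<Sum>j\<in>UNIV. E p $ i $ j * X $ i * Y $ j)" for X Y
      by (simp add: \<pi>_def E_def c_def ricci_som_ray[OF p] gform_som_ray frame_ricci_def minkowski_def
          inner_vec_def sum_4 power2_eq_square algebra_simps)
  qed
  ultimately show ?thesis
    unfolding pseudo_qe_def Let_def by (blast intro: smooth_fun_const)
qed

theorem mainTheorem1: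
  fixes a :: real
  assumes "a \<noteq> 0"
  defines "G \<equiv> som_ray a" and "M \<equiv> som_ray_domain"
  shows "cyclic_parallel_ricci G M
       \<and> k_quasi_einstein 2 G M
       \<and> ein3 G M
       \<and> gqe_chaki G M \<and> gqe_de_ghosh G M
       \<and> pseudo_qe G M
       \<and> special_ricci_gen_pseudosym G M
       \<and> weyl_pseudosym G M
       \<and> gen_roter G M
       \<and> compatible (Rtens G) (ricop G) M
       \<and> compatible (Ctens G) (ricop G) M
       \<and> compatible (Wtens G) (ricop G) M
       \<and> compatible (Ktens G) (ricop G) M"
  unfolding G_def M_def
  using cyclic_parallel_ricci_som_ray k_quasi_einstein_2_som_ray[OF assms(1)] ein3_som_ray
    gqe_chaki_som_ray gqe_de_ghosh_som_ray pseudo_qe_som_ray special_ricci_gen_pseudosym_som_ray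
    weyl_pseudosym_som_ray gen_roter_som_ray[OF assms(1)] ricop_compatible_som_ray
  by blast

end
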